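(* Let $f$ be a real-valued function on pairs $(\rho,\sigma)$ with $\sigma\in\mathcal F$ and $\rho$ a density matrix on the same Hilbert space as $\sigma$, which is locally monotonic with respect to $\mathcal C_{\mathcal F}$. Then $f(\rho,\sigma)\ge f(C[\rho],C[\sigma])$ for every $C\in\mathcal C_{\mathcal F}$ (with $\sigma\in\mathcal F$ in its domain), and the same holds for $f'(\rho,\sigma):=f(\rho,\sigma)-f(\sigma,\sigma)$. Moreover, $f(\sigma,\sigma)$ is independent of $\sigma\in\mathcal F$.
   Context: $\mathcal F$ is the set of all full-rank density matrices on finite-dimensional Hilbert spaces, and $\mathcal C_{\mathcal F}$ is the set of quantum channels (between possibly different finite-dimensional Hilbert spaces) mapping full-rank states to full-rank states. $f$ is locally monotonic with respect to $\mathcal C_{\mathcal F}$ if whenever $C\in\mathcal C_{\mathcal F}$ acts on $\mathcal H_1\otimes\mathcal H_2$ with output space $\mathcal H'_1\otimes\mathcal H'_2$, $\sigma_1\otimes\sigma_2\in\mathcal F$ and $C[\sigma_1\otimes\sigma_2]=\sigma'_1\otimes\sigma'_2\in\mathcal F$, then for all density matrices $\rho_i$ on $\mathcal H_i$: $f(\rho_1,\sigma_1)+f(\rho_2,\sigma_2)\ge f(\rho'_1,\sigma'_1)+f(\rho'_2,\sigma'_2)$, with $\rho'_1=\mathrm{Tr}_2[C(\rho_1\otimes\rho_2)]$, $\rho'_2=\mathrm{Tr}_1[C(\rho_1\otimes\rho_2)]$. *)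

theory Defs
  imports Complex_Main "Jordan_Normal_Form.Determinant"
begin

text \<open>A d-dimensional Hilbert space is identified with C^d; operators are complex d x d matrices.
  A bipartite space H1 (x) H2 with dims d1, d2 is C^(d1*d2) with the Kronecker ordering
  (index i of the product corresponds to (i div d2, i mod d2)).\<close>

definition mtrace :: "complex mat \<Rightarrow> complex" where
  "mtrace A = (\<Sum>i<dim_row A. A $$ (i, i))"

definition dagger :: "complex mat \<Rightarrow> complex mat" where
  "dagger A = mat (dim_col A) (dim_row A) (\<lambda>(i, j). cnj (A $$ (j, i)))"

definition psd :: "nat \<Rightarrow> complex mat \<Rightarrow> bool" where
  "psd d A \<longleftrightarrow> A \<in> carrier_mat d d \<and> dagger A = A \<and>
     (\<forall>v :: complex vec. dim_vec v = d \<longrightarrow> 0 \<le> Re (conjugate v \<bullet> (A *\<^sub>v v)))"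

definition density :: "nat \<Rightarrow> complex mat \<Rightarrow> bool" where
  "density d \<rho> \<longleftrightarrow> psd d \<rho> \<and> mtrace \<rho> = 1"

text \<open>Full-rank density matrices on C^d (the set F restricted to dimension d).\<close>
definition fullrank_state :: "nat \<Rightarrow> complex mat \<Rightarrow> bool" where
  "fullrank_state d \<sigma> \<longleftrightarrow> density d \<sigma> \<and> det \<sigma> \<noteq> 0"

definition kron :: "complex mat \<Rightarrow> complex mat \<Rightarrow> complex mat" where
  "kron A B = mat (dim_row A * dim_row B) (dim_col A * dim_col B)
     (\<lambda>(i, j). A $$ (i div dim_row B, j div dim_col B) * B $$ (i mod dim_row B, j mod dim_col B))"

definition ptrace2 :: "nat \<Rightarrow> nat \<Rightarrow> complex mat \<Rightarrow> complex mat" where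
  "ptrace2 d1 d2 X = mat d1 d1 (\<lambda>(i, j). \<Sum>k<d2. X $$ (i * d2 + k, j * d2 + k))"

definition ptrace1 :: "nat \<Rightarrow> nat \<Rightarrow> complex mat \<Rightarrow> complex mat" where
  "ptrace1 d1 d2 X = mat d2 d2 (\<lambda>(i, j). \<Sum>k<d1. X $$ (k * d2 + i, k * d2 + j))"

text \<open>id_k (x) C applied to a (k*n) x (k*n) matrix, for a map C from n x n to m x m matrices.\<close>
definition ampl :: "nat \<Rightarrow> nat \<Rightarrow> nat \<Rightarrow> (complex mat \<Rightarrow> complex mat) \<Rightarrow> complex mat \<Rightarrow> complex mat" where
  "ampl k n m C X = mat (k * m) (k * m) (\<lambda>(i, j).
      C (mat n n (\<lambda>(p, q). X $$ ((i div m) * n + p, (j div m) * n + q))) $$ (i mod m, j mod m))"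

definition channel :: "nat \<Rightarrow> nat \<Rightarrow> (complex mat \<Rightarrow> complex mat) \<Rightarrow> bool" where
  "channel n m C \<longleftrightarrow>
     (\<forall>X \<in> carrier_mat n n. C X \<in> carrier_mat m m) \<and>
     (\<forall>X \<in> carrier_mat n n. \<forall>Y \<in> carrier_mat n n. \<forall>a b :: complex.
         C (a \<cdot>\<^sub>m X + b \<cdot>\<^sub>m Y) = a \<cdot>\<^sub>m C X + b \<cdot>\<^sub>m C Y) \<and>
     (\<forall>X \<in> carrier_mat n n. mtrace (C X) = mtrace X) \<and>
     (\<forall>k X. psd (k * n) X \<longrightarrow> psd (k * m) (ampl k n m C X))"

definition channel_F :: "nat \<Rightarrow> nat \<Rightarrow> (complex mat \<Rightarrow> complex mat) \<Rightarrow> bool" where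
  "channel_F n m C \<longleftrightarrow> channel n m C \<and>
     (\<forall>\<sigma>. fullrank_state n \<sigma> \<longrightarrow> fullrank_state m (C \<sigma>))"

text \<open>Local monotonicity of f with respect to C_F. f is only meaningful on pairs
  (rho, sigma) with sigma full rank and rho a density matrix of the same dimension.\<close>
definition locally_monotonic :: "(complex mat \<Rightarrow> complex mat \<Rightarrow> real) \<Rightarrow> bool" where
  "locally_monotonic f \<longleftrightarrow>
     (\<forall>n1 n2 m1 m2 C \<sigma>1 \<sigma>2 \<sigma>1' \<sigma>2'.
        channel_F (n1 * n2) (m1 * m2) C \<and>
        fullrank_state n1 \<sigma>1 \<and> fullrank_state n2 \<sigma>2 \<and>
        fullrank_state m1 \<sigma>1' \<and> fullrank_state m2 \<sigma>2' \<and>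
        fullrank_state (n1 * n2) (kron \<sigma>1 \<sigma>2) \<and>
        C (kron \<sigma>1 \<sigma>2) = kron \<sigma>1' \<sigma>2' \<and>
        fullrank_state (m1 * m2) (kron \<sigma>1' \<sigma>2') \<longrightarrow>
        (\<forall>\<rho>1 \<rho>2. density n1 \<rho>1 \<and> density n2 \<rho>2 \<longrightarrow>
           f \<rho>1 \<sigma>1 + f \<rho>2 \<sigma>2 \<ge>
           f (ptrace2 m1 m2 (C (kron \<rho>1 \<rho>2))) \<sigma>1' +
           f (ptrace1 m1 m2 (C (kron \<rho>1 \<rho>2))) \<sigma>2'))"

end

(* Taking the second system one-dimensional, in the state 1, turns local monotonicity into
   monotonicity under every channel of C_F. The replacement channel X \<mapsto> tr(X) \<tau> lies in C_F
   and sends \<sigma> to \<tau>, so f(\<tau>,\<tau>) \<le> f(\<sigma>,\<sigma>) for all full-rank \<sigma>, \<tau>; hence f(\<sigma>,\<sigma>) is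
   constant, and monotonicity of f' follows. The amplification of the replacement channel is
   Y \<mapsto> tr\<^sub>2(Y) \<otimes> \<tau>, so its complete positivity reduces to positivity of partial traces and
   of tensor products of positive semidefinite matrices. *)

theory Submission
  imports Defs
begin

definition quad_form :: "nat \<Rightarrow> (nat \<Rightarrow> nat \<Rightarrow> complex) \<Rightarrow> (nat \<Rightarrow> complex) \<Rightarrow> complex" where
  "quad_form k X c = (\<Sum>a<k. \<Sum>b<k. cnj (c a) * X a b * c b)"

definition psd_array :: "nat \<Rightarrow> (nat \<Rightarrow> nat \<Rightarrow> complex) \<Rightarrow> bool" where
  "psd_array k X \<longleftrightarrow> (\<forall>a<k. \<forall>b<k. X a b = cnj (X b a)) \<and> (\<forall>c. 0 \<le> Re (quad_form k X c))"

lemma psd_arrayD: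
  assumes "psd_array k X"
  shows "\<And>a b. a < k \<Longrightarrow> b < k \<Longrightarrow> X a b = cnj (X b a)" and "\<And>c. 0 \<le> Re (quad_form k X c)"
  using assms unfolding psd_array_def by blast+

lemma sum_mult_add_unit:
  fixes g c :: "nat \<Rightarrow> 'a::semiring_0"
  assumes "j < k"
  shows "(\<Sum>i<k. g i * (c i + (if i = j then t else 0))) = (\<Sum>i<k. g i * c i) + g j * t"
  using assms by (simp add: distrib_left sum.distrib) (simp add: if_distrib cong: if_cong)

lemma quad_form_add_unit:
  assumes "j < k"
  shows "quad_form k X (\<lambda>i. c i + (if i = j then t else 0)) =
    quad_form k X c + cnj t * (\<Sum>b<k. X j b * c b) + t * (\<Sum>a<k. cnj (c a) * X a j)
      + cnj t * t * X j j"
proof -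
  have rows: "quad_form k X d = (\<Sum>a<k. (\<Sum>b<k. X a b * d b) * cnj (d a))" for d
    unfolding quad_form_def by (simp add: sum_distrib_left sum_distrib_right mult_ac)
  have "quad_form k X (\<lambda>i. c i + (if i = j then t else 0))
      = (\<Sum>a<k. ((\<Sum>b<k. X a b * c b) + X a j * t) * cnj (c a))
        + ((\<Sum>b<k. X j b * c b) + X j j * t) * cnj t"
    unfolding rows
    by (simp only: sum_mult_add_unit[OF assms] complex_cnj_add if_distrib[of cnj] complex_cnj_zero)
  then show ?thesis
    unfolding rows by (simp add: algebra_simps sum.distrib sum_distrib_left)
qed

lemma quad_form_unit: "j < k \<Longrightarrow> quad_form k X (\<lambda>i. if i = j then 1 else 0) = X j j"
  using quad_form_add_unit[of j k X "\<lambda>_. 0" 1] by (simp add: quad_form_def)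

lemma psd_array_diag:
  assumes "psd_array k X" "j < k"
  shows "X j j = of_real (Re (X j j))" and "0 \<le> Re (X j j)"
proof -
  have "cnj (X j j) = X j j" using psd_arrayD(1)[OF assms(1) assms(2,2)] by simp
  then show "X j j = of_real (Re (X j j))" by (simp add: complex_eq_iff)
  show "0 \<le> Re (X j j)"
    using psd_arrayD(2)[OF assms(1)] quad_form_unit[OF assms(2)] by metis
qed

lemma psd_array_row_eq_0:
  assumes X: "psd_array k X" and n: "n < k" "X n n = 0" and b: "b < k"
  shows "X n b = 0"
proof (rule ccontr)
  assume "X n b \<noteq> 0"
  define s where "s = X n b"
  define r where "r = (Re (X b b) + 1) / (2 * (cmod s)\<^sup>2)"
  define c where "c = (\<lambda>i. if i = b then (1::complex) else 0)"
  define t where "t = - of_real r * s"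
  have s_pos: "0 < (cmod s)\<^sup>2" using \<open>X n b \<noteq> 0\<close> unfolding s_def by simp
  have unit: "quad_form k X c = X b b"
    unfolding c_def by (rule quad_form_unit[OF b])
  have row: "(\<Sum>b'<k. X n b' * c b') = s"
    using b unfolding c_def s_def by (simp add: if_distrib cong: if_cong)
  have "(\<Sum>a<k. cnj (c a) * X a n) = (\<Sum>a<k. if a = b then X a n else 0)"
    by (intro sum.cong) (auto simp: c_def)
  then have col: "(\<Sum>a<k. cnj (c a) * X a n) = cnj s"
    using b psd_arrayD(1)[OF X b n(1)] unfolding s_def by simp
  have "quad_form k X (\<lambda>i. c i + (if i = n then t else 0)) = X b b + cnj t * s + t * cnj s"
    using quad_form_add_unit[OF n(1), of X c t] unit row col n(2) by simp
  also have "\<dots> = X b b - of_real (2 * r) * (s * cnj s)"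
    unfolding t_def by (simp add: algebra_simps)
  also have "\<dots> = X b b - of_real (2 * r * (cmod s)\<^sup>2)"
    by (simp flip: complex_norm_square)
  finally have "Re (quad_form k X (\<lambda>i. c i + (if i = n then t else 0)))
      = Re (X b b) - 2 * r * (cmod s)\<^sup>2"
    by simp
  also have "\<dots> = -1"
    using s_pos unfolding r_def by (simp add: field_simps)
  finally show False
    using psd_arrayD(2)[OF X, of "\<lambda>i. c i + (if i = n then t else 0)"] by simp
qed

lemma psd_array_schur_complement:
  assumes X: "psd_array k X" and n: "n < k" and d: "X n n \<noteq> 0"
  shows "psd_array k (\<lambda>a b. X a b - X a n * X n b / X n n)"
proof -
  have d_real: "cnj (X n n) = X n n" using psd_arrayD(1)[OF X n n] by simp
  have herm: "X a b - X a n * X n b / X n n = cnj (X b a - X b n * X n a / X n n)"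
    if "a < k" "b < k" for a b
  proof -
    have "X a b = cnj (X b a)" "X a n = cnj (X n a)" "X n b = cnj (X b n)"
      using psd_arrayD(1)[OF X] n that by blast+
    then show ?thesis using d_real by (simp add: mult.commute)
  qed
  have quad: "0 \<le> Re (quad_form k (\<lambda>a b. X a b - X a n * X n b / X n n) c)" for c
  proof -
    define s where "s = (\<Sum>b<k. X n b * c b)"
    define t where "t = - s / X n n"
    have cs: "(\<Sum>a<k. cnj (c a) * X a n) = cnj s"
      unfolding s_def by (auto intro!: sum.cong simp: psd_arrayD(1)[OF X _ n])
    have "quad_form k (\<lambda>a b. X a b - X a n * X n b / X n n) c
        = quad_form k X c - (\<Sum>a<k. cnj (c a) * X a n) * s / X n n"
      unfolding quad_form_def s_def
      by (simp add: algebra_simps sum_subtractf sum_distrib_left sum_distrib_right sum_divide_distrib)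
    also have "\<dots> = quad_form k X c + cnj t * s + t * cnj s + cnj t * t * X n n"
      unfolding cs t_def using d d_real by (simp add: field_simps)
    also have "\<dots> = quad_form k X (\<lambda>i. c i + (if i = n then t else 0))"
      using quad_form_add_unit[OF n, of X c t] cs by (simp add: s_def)
    finally show ?thesis
      using psd_arrayD(2)[OF X] by simp
  qed
  show ?thesis
    unfolding psd_array_def using herm quad by blast
qed

text \<open>The sum is the trace of X times the transpose of q, so this is the positivity of the
  trace of a product of positive semidefinite matrices. Symmetric Gaussian elimination on X
  splits off rank-one terms, each pairing nonnegatively with q, until the remaining Schur
  complement vanishes.\<close>
lemma psd_array_pairing_nonneg:
  assumes X: "psd_array k X" and q: "\<And>c. 0 \<le> Re (quad_form k q c)"
  shows "0 \<le> Re (\<Sum>a<k. \<Sum>b<k. X a b * q a b)"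
proof -
  have "0 \<le> Re (\<Sum>a<k. \<Sum>b<k. X a b * q a b)"
    if "j \<le> k" "psd_array k X" "\<forall>a<k. \<forall>b<k. a < j \<or> b < j \<longrightarrow> X a b = 0" for j X
    using that
  proof (induction j arbitrary: X rule: inc_induct)
    case base
    then show ?case by simp
  next
    case (step n X)
    have n: "n < k" using step.hyps by simp
    have vanish: "X a b = 0" if "a < k" "b < k" "a < n \<or> b < n" for a b
      using step.prems(2) that by blast
    show ?case
    proof (cases "X n n = 0")
      case True
      have "X n b = 0" "X b n = 0" if "b < k" for b
        using psd_array_row_eq_0[OF step.prems(1) n True that] psd_arrayD(1)[OF step.prems(1) that n]
        by simp_all
      then show ?thesis
        using vanish by (intro step.IH[OF step.prems(1)]) (metis less_Suc_eq)
    next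
      case False
      define X' where "X' a b = X a b - X a n * X n b / X n n" for a b
      have "psd_array k X'"
        unfolding X'_def by (rule psd_array_schur_complement[OF step.prems(1) n False])
      moreover have "X' a b = 0" if "a < k" "b < k" "a < Suc n \<or> b < Suc n" for a b
        using that vanish[of a b] vanish[of a n] vanish[of n b] n False
        unfolding X'_def by (auto simp: less_Suc_eq)
      ultimately have Schur: "0 \<le> Re (\<Sum>a<k. \<Sum>b<k. X' a b * q a b)"
        using step.IH[of X'] by blast
      have "(\<Sum>a<k. \<Sum>b<k. X a n * X n b * q a b) = quad_form k q (\<lambda>a. cnj (X a n))"
        unfolding quad_form_def
        by (auto intro!: sum.cong simp: psd_arrayD(1)[OF step.prems(1) n] mult_ac)
      then have rank_one: "0 \<le> Re (\<Sum>a<k. \<Sum>b<k. X a n * X n b * q a b)"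
        using q by simp
      define r where "r = Re (X n n)"
      have r: "X n n = of_real r" "0 \<le> r"
        unfolding r_def by (rule psd_array_diag[OF step.prems(1) n])+
      have "(\<Sum>a<k. \<Sum>b<k. X a b * q a b) = (\<Sum>a<k. \<Sum>b<k. X' a b * q a b)
          + of_real (1 / r) * (\<Sum>a<k. \<Sum>b<k. X a n * X n b * q a b)"
        unfolding X'_def r(1)
        by (simp add: algebra_simps sum_subtractf sum_distrib_left sum.distrib)
      then show ?thesis
        using Schur rank_one r(2) by simp
    qed
  qed
  from this[of 0 X] show ?thesis using X by simp
qed

lemma mult_add_less_mult:
  fixes a s k m :: nat
  assumes "a < k" "s < m"
  shows "a * m + s < k * m"
proof -
  have "a * m + s < Suc a * m" using assms(2) by simp
  also have "\<dots> \<le> k * m" using assms(1) by (intro mult_le_mono1) simp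
  finally show ?thesis .
qed

lemma sum_lessThan_mult: "(\<Sum>i<k * m. g i) = (\<Sum>a<k. \<Sum>s<m. g (a * m + s))"
  for k m :: nat
  by (simp add: sum.nat_group[symmetric] sum.atLeastLessThan_shift_0 add.commute atLeast0LessThan)

lemma dagger_eq_self_iff:
  assumes "A \<in> carrier_mat d d"
  shows "dagger A = A \<longleftrightarrow> (\<forall>i<d. \<forall>j<d. A $$ (i, j) = cnj (A $$ (j, i)))"
proof
  assume herm: "dagger A = A"
  show "\<forall>i<d. \<forall>j<d. A $$ (i, j) = cnj (A $$ (j, i))"
  proof (intro allI impI)
    fix i j assume "i < d" "j < d"
    then have "dagger A $$ (i, j) = cnj (A $$ (j, i))" using assms by (simp add: dagger_def)
    then show "A $$ (i, j) = cnj (A $$ (j, i))" unfolding herm .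
  qed
next
  assume herm: "\<forall>i<d. \<forall>j<d. A $$ (i, j) = cnj (A $$ (j, i))"
  show "dagger A = A"
  proof (rule eq_matI)
    fix i j assume "i < dim_row A" "j < dim_col A"
    then have "i < d" "j < d" using assms by auto
    then have "A $$ (i, j) = cnj (A $$ (j, i))" using herm by blast
    then show "dagger A $$ (i, j) = A $$ (i, j)"
      using \<open>i < d\<close> \<open>j < d\<close> assms by (simp add: dagger_def)
  qed (use assms in \<open>simp_all add: dagger_def\<close>)
qed

lemma psd_iff_psd_array:
  "psd d A \<longleftrightarrow> A \<in> carrier_mat d d \<and> psd_array d (\<lambda>i j. A $$ (i, j))"
proof (cases "A \<in> carrier_mat d d")
  case True
  have quad: "conjugate v \<bullet> (A *\<^sub>v v) = quad_form d (\<lambda>i j. A $$ (i, j)) (\<lambda>i. v $ i)"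
    if "dim_vec v = d" for v :: "complex vec"
    using that True unfolding quad_form_def
    by (auto simp: scalar_prod_def sum_distrib_left atLeast0LessThan mult.assoc intro!: sum.cong)
  have "(\<forall>v :: complex vec. dim_vec v = d \<longrightarrow> 0 \<le> Re (conjugate v \<bullet> (A *\<^sub>v v)))
      \<longleftrightarrow> (\<forall>c. 0 \<le> Re (quad_form d (\<lambda>i j. A $$ (i, j)) c))"
  proof
    assume psd_vec: "\<forall>v :: complex vec. dim_vec v = d \<longrightarrow> 0 \<le> Re (conjugate v \<bullet> (A *\<^sub>v v))"
    show "\<forall>c. 0 \<le> Re (quad_form d (\<lambda>i j. A $$ (i, j)) c)"
    proof
      fix c
      have "quad_form d (\<lambda>i j. A $$ (i, j)) c = quad_form d (\<lambda>i j. A $$ (i, j)) (\<lambda>i. vec d c $ i)"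
        unfolding quad_form_def by simp
      then show "0 \<le> Re (quad_form d (\<lambda>i j. A $$ (i, j)) c)"
        using quad[of "vec d c"] psd_vec[rule_format, of "vec d c"] by simp
    qed
  qed (simp add: quad)
  then show ?thesis
    unfolding psd_def psd_array_def using True dagger_eq_self_iff[OF True] by blast
next
  case False
  then show ?thesis unfolding psd_def by blast
qed

lemma kron_psd:
  assumes Y: "psd k Y" and T: "psd m T"
  shows "psd (k * m) (kron Y T)"
proof -
  have Yc: "Y \<in> carrier_mat k k" and pY: "psd_array k (\<lambda>i j. Y $$ (i, j))"
    and Tc: "T \<in> carrier_mat m m" and pT: "psd_array m (\<lambda>i j. T $$ (i, j))"
    using Y T unfolding psd_iff_psd_array by auto
  have entry: "kron Y T $$ (a * m + s, b * m + t) = Y $$ (a, b) * T $$ (s, t)"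
    if "a < k" "b < k" "s < m" "t < m" for a b s t
    using that Yc Tc by (simp add: kron_def mult_add_less_mult)
  have herm: "kron Y T $$ (i, j) = cnj (kron Y T $$ (j, i))" if "i < k * m" "j < k * m" for i j
  proof -
    have "m > 0" using that by (cases m) auto
    then have "i div m < k" "j div m < k" "i mod m < m" "j mod m < m"
      using that by (simp_all add: less_mult_imp_div_less)
    then have "Y $$ (i div m, j div m) = cnj (Y $$ (j div m, i div m))"
      "T $$ (i mod m, j mod m) = cnj (T $$ (j mod m, i mod m))"
      using psd_arrayD(1)[OF pY] psd_arrayD(1)[OF pT] by blast+
    then show ?thesis
      using that Yc Tc by (simp add: kron_def)
  qed
  have quad: "0 \<le> Re (quad_form (k * m) (\<lambda>i j. kron Y T $$ (i, j)) c)" for c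
  proof -
    define q where "q a b = (\<Sum>s<m. \<Sum>t<m. cnj (c (a * m + s)) * T $$ (s, t) * c (b * m + t))"
      for a b
    define w where "w e t = (\<Sum>b<k. e b * c (b * m + t))" for e t
    have "quad_form (k * m) (\<lambda>i j. kron Y T $$ (i, j)) c = (\<Sum>a<k. \<Sum>b<k. Y $$ (a, b) * q a b)"
      unfolding quad_form_def sum_lessThan_mult q_def
      by (simp add: entry sum_distrib_left mult_ac sum.swap[of _ "{..<m}" "{..<k}"])
    moreover have "quad_form k q e = quad_form m (\<lambda>i j. T $$ (i, j)) (w e)" for e
      unfolding quad_form_def q_def w_def
      by (simp add: sum_distrib_left sum_distrib_right mult_ac sum.swap[of _ "{..<k}" "{..<m}"])
    ultimately show ?thesis
      using psd_array_pairing_nonneg[OF pY] psd_arrayD(2)[OF pT] by simp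
  qed
  moreover have "kron Y T \<in> carrier_mat (k * m) (k * m)"
    using Yc Tc by (simp add: kron_def)
  ultimately show ?thesis
    unfolding psd_iff_psd_array psd_array_def using herm by blast
qed

lemma ptrace2_psd:
  assumes X: "psd (k * n) X"
  shows "psd k (ptrace2 k n X)"
proof -
  have pX: "psd_array (k * n) (\<lambda>i j. X $$ (i, j))"
    using X unfolding psd_iff_psd_array by auto
  have entry: "ptrace2 k n X $$ (a, b) = (\<Sum>p<n. X $$ (a * n + p, b * n + p))"
    if "a < k" "b < k" for a b
    using that by (simp add: ptrace2_def)
  have herm: "ptrace2 k n X $$ (a, b) = cnj (ptrace2 k n X $$ (b, a))" if "a < k" "b < k" for a b
  proof -
    have "X $$ (a * n + p, b * n + p) = cnj (X $$ (b * n + p, a * n + p))" if "p < n" for p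
      using psd_arrayD(1)[OF pX] mult_add_less_mult \<open>a < k\<close> \<open>b < k\<close> that by blast
    then show ?thesis
      using that by (simp add: entry)
  qed
  have quad: "0 \<le> Re (quad_form k (\<lambda>i j. ptrace2 k n X $$ (i, j)) c)" for c
  proof -
    \<comment> \<open>the partial trace is a sum of compressions of X to the slices i mod n = p\<close>
    define v where "v p i = (if i mod n = p then c (i div n) else 0)" for p i
    have slice: "quad_form (k * n) (\<lambda>i j. X $$ (i, j)) (v p)
        = (\<Sum>a<k. \<Sum>b<k. cnj (c a) * X $$ (a * n + p, b * n + p) * c b)" if "p < n" for p
    proof -
      have "cnj (v p (a * n + s)) * X $$ (a * n + s, b * n + t) * v p (b * n + t)
          = (if t = p then if s = p then cnj (c a) * X $$ (a * n + p, b * n + p) * c b else 0 else 0)"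
        if "s < n" "t < n" for a b s t
        using that by (simp add: v_def)
      then show ?thesis
        unfolding quad_form_def sum_lessThan_mult
        using \<open>p < n\<close> by (simp add: sum.swap[of _ "{..<k}" "{..<n}"])
    qed
    have "quad_form k (\<lambda>i j. ptrace2 k n X $$ (i, j)) c
        = (\<Sum>p<n. \<Sum>a<k. \<Sum>b<k. cnj (c a) * X $$ (a * n + p, b * n + p) * c b)"
      unfolding quad_form_def
      by (simp add: entry sum_distrib_left sum_distrib_right sum.swap[of _ "{..<n}" "{..<k}"])
    also have "\<dots> = (\<Sum>p<n. quad_form (k * n) (\<lambda>i j. X $$ (i, j)) (v p))"
      by (simp add: slice)
    finally show ?thesis
      using psd_arrayD(2)[OF pX] by (simp add: sum_nonneg)
  qed
  have "ptrace2 k n X \<in> carrier_mat k k"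
    by (simp add: ptrace2_def)
  then show ?thesis
    unfolding psd_iff_psd_array psd_array_def using herm quad by blast
qed

lemma one_smult_mat: "(1 :: 'a :: semiring_1) \<cdot>\<^sub>m A = A"
  by (rule eq_matI) auto

lemma mtrace_smult: "A \<in> carrier_mat n n \<Longrightarrow> mtrace (a \<cdot>\<^sub>m A) = a * mtrace A"
  unfolding mtrace_def by (simp add: sum_distrib_left)

lemma mtrace_lincomb:
  assumes "A \<in> carrier_mat n n" "B \<in> carrier_mat n n"
  shows "mtrace (a \<cdot>\<^sub>m A + b \<cdot>\<^sub>m B) = a * mtrace A + b * mtrace B"
  using assms unfolding mtrace_def by (simp add: sum.distrib sum_distrib_left)

definition replacement_channel :: "complex mat \<Rightarrow> complex mat \<Rightarrow> complex mat" where
  "replacement_channel \<tau> X = mtrace X \<cdot>\<^sub>m \<tau>"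

lemma ampl_replacement_channel:
  assumes \<tau>: "\<tau> \<in> carrier_mat m m"
  shows "ampl k n m (replacement_channel \<tau>) X = kron (ptrace2 k n X) \<tau>"
proof (rule eq_matI)
  fix i j assume "i < dim_row (kron (ptrace2 k n X) \<tau>)" "j < dim_col (kron (ptrace2 k n X) \<tau>)"
  then have "i < k * m" "j < k * m" using \<tau> by (simp_all add: kron_def ptrace2_def)
  moreover from this have "m > 0" by (cases m) auto
  ultimately show "ampl k n m (replacement_channel \<tau>) X $$ (i, j) = kron (ptrace2 k n X) \<tau> $$ (i, j)"
    using \<tau> by (simp add: ampl_def kron_def ptrace2_def replacement_channel_def mtrace_def
        less_mult_imp_div_less)
qed (use \<tau> in \<open>simp_all add: ampl_def kron_def ptrace2_def\<close>)

lemma channel_F_replacement_channel: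
  assumes \<tau>: "fullrank_state m \<tau>"
  shows "channel_F n m (replacement_channel \<tau>)"
proof -
  have psd_\<tau>: "psd m \<tau>" and tr_\<tau>: "mtrace \<tau> = 1"
    using \<tau> unfolding fullrank_state_def density_def by auto
  then have carrier_\<tau>: "\<tau> \<in> carrier_mat m m" unfolding psd_def by simp
  have lin: "(a * x + b * y) \<cdot>\<^sub>m \<tau> = a \<cdot>\<^sub>m (x \<cdot>\<^sub>m \<tau>) + b \<cdot>\<^sub>m (y \<cdot>\<^sub>m \<tau>)" for a b x y
    by (rule eq_matI) (simp_all add: algebra_simps)
  have "channel n m (replacement_channel \<tau>)"
    unfolding channel_def replacement_channel_def
    using carrier_\<tau> tr_\<tau> psd_\<tau> kron_psd ptrace2_psd
      ampl_replacement_channel[OF carrier_\<tau>, unfolded replacement_channel_def]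
    by (simp add: lin mtrace_lincomb mtrace_smult)
  moreover have "fullrank_state m (replacement_channel \<tau> \<sigma>)" if "fullrank_state n \<sigma>" for \<sigma>
    using that \<tau> by (simp add: replacement_channel_def fullrank_state_def density_def one_smult_mat)
  ultimately show ?thesis unfolding channel_F_def by blast
qed

lemma fullrank_state_one: "fullrank_state 1 (1\<^sub>m 1)"
proof -
  have "0 \<le> Re (quad_form 1 (\<lambda>i j. (1\<^sub>m 1 :: complex mat) $$ (i, j)) c)" for c
    unfolding quad_form_def by (simp add: mult.commute[of "cnj _"] complex_mult_cnj)
  then have "psd 1 (1\<^sub>m 1)"
    unfolding psd_iff_psd_array psd_array_def by simp
  then show ?thesis
    unfolding fullrank_state_def density_def mtrace_def by simp
qed

lemma kron_one_right: "kron A (1\<^sub>m 1) = A"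
  by (rule eq_matI) (auto simp: kron_def)

lemma locally_monotonic_imp_monotone:
  assumes f: "locally_monotonic f" and C: "channel_F n m C"
    and \<sigma>: "fullrank_state n \<sigma>" and \<rho>: "density n \<rho>"
  shows "f (C \<rho>) (C \<sigma>) \<le> f \<rho> \<sigma>"
proof -
  define I where "I = (1\<^sub>m 1 :: complex mat)"
  have I: "fullrank_state 1 I" "density 1 I"
    using fullrank_state_one unfolding I_def fullrank_state_def by auto
  have kron_I: "kron A I = A" for A
    unfolding I_def by (rule kron_one_right)
  have C\<sigma>: "fullrank_state m (C \<sigma>)" using C \<sigma> unfolding channel_F_def by blast
  have C\<rho>: "C \<rho> \<in> carrier_mat m m" "mtrace (C \<rho>) = 1"
    using C \<rho> unfolding channel_F_def channel_def density_def psd_def by auto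
  have "ptrace2 m 1 (C \<rho>) = C \<rho>"
    by (rule eq_matI) (use C\<rho> in \<open>auto simp: ptrace2_def\<close>)
  moreover have "ptrace1 m 1 (C \<rho>) = I"
    by (rule eq_matI) (use C\<rho> in \<open>auto simp: I_def ptrace1_def mtrace_def\<close>)
  moreover have "f \<rho> \<sigma> + f I I \<ge>
      f (ptrace2 m 1 (C (kron \<rho> I))) (C \<sigma>) + f (ptrace1 m 1 (C (kron \<rho> I))) I"
    using f[unfolded locally_monotonic_def, rule_format, of n 1 m 1 C \<sigma> I "C \<sigma>" I \<rho> I]
      C \<sigma> \<rho> I C\<sigma> by (simp add: kron_I)
  ultimately show ?thesis
    by (simp add: kron_I)
qed

lemma locally_monotonic_diagonal_const:
  assumes f: "locally_monotonic f" and \<sigma>: "fullrank_state n \<sigma>" and \<tau>: "fullrank_state m \<tau>"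
  shows "f \<sigma> \<sigma> = f \<tau> \<tau>"
proof -
  have le: "f \<tau> \<tau> \<le> f \<sigma> \<sigma>" if \<sigma>: "fullrank_state n \<sigma>" and \<tau>: "fullrank_state m \<tau>"
    for n m \<sigma> \<tau>
  proof -
    have "density n \<sigma>" using \<sigma> unfolding fullrank_state_def by simp
    moreover from this have "replacement_channel \<tau> \<sigma> = \<tau>"
      by (simp add: replacement_channel_def density_def one_smult_mat)
    ultimately show ?thesis
      using locally_monotonic_imp_monotone[OF f channel_F_replacement_channel[OF \<tau>] \<sigma>, of \<sigma>]
      by simp
  qed
  show ?thesis using le[OF \<sigma> \<tau>] le[OF \<tau> \<sigma>] by simp
qed

theorem lemma39:
  fixes f :: "complex mat \<Rightarrow> complex mat \<Rightarrow> real"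
  assumes "locally_monotonic f"
  shows "(\<forall>n m C \<rho> \<sigma>. channel_F n m C \<and> fullrank_state n \<sigma> \<and> density n \<rho> \<longrightarrow>
            f \<rho> \<sigma> \<ge> f (C \<rho>) (C \<sigma>))
       \<and> (\<forall>n m C \<rho> \<sigma>. channel_F n m C \<and> fullrank_state n \<sigma> \<and> density n \<rho> \<longrightarrow>
            f \<rho> \<sigma> - f \<sigma> \<sigma> \<ge> f (C \<rho>) (C \<sigma>) - f (C \<sigma>) (C \<sigma>))
       \<and> (\<forall>n m \<sigma> \<tau>. fullrank_state n \<sigma> \<and> fullrank_state m \<tau> \<longrightarrow> f \<sigma> \<sigma> = f \<tau> \<tau>)"
proof (intro conjI allI impI)
  fix n m C \<rho> \<sigma> assume "channel_F n m C \<and> fullrank_state n \<sigma> \<and> density n \<rho>"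
  then have C: "channel_F n m C" and \<sigma>: "fullrank_state n \<sigma>" and \<rho>: "density n \<rho>" by auto
  show mono: "f \<rho> \<sigma> \<ge> f (C \<rho>) (C \<sigma>)"
    by (rule locally_monotonic_imp_monotone[OF assms C \<sigma> \<rho>])
  have "fullrank_state m (C \<sigma>)" using C \<sigma> unfolding channel_F_def by blast
  then have "f (C \<sigma>) (C \<sigma>) = f \<sigma> \<sigma>"
    using locally_monotonic_diagonal_const[OF assms] \<sigma> by blast
  then show "f \<rho> \<sigma> - f \<sigma> \<sigma> \<ge> f (C \<rho>) (C \<sigma>) - f (C \<sigma>) (C \<sigma>)"
    using mono by simp
next
  fix n m \<sigma> \<tau> assume "fullrank_state n \<sigma> \<and> fullrank_state m \<tau>"
  then show "f \<sigma> \<sigma> = f \<tau> \<tau>" using locally_monotonic_diagonal_const[OF assms] by blast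
qed

end
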